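(* Consider the second-order Kuramoto model with bonding force $$\dot\theta_i=\omega_i,\qquad \dot\omega_i=\frac{1}{N}\sum_{j=1}^N\big[\kappa_0\cos(\theta_j-\theta_i)+\kappa_1\big](\omega_j-\omega_i)+\frac{\kappa_2}{N}\sum_{j=1}^N\big[|\theta_j-\theta_i|-\theta^\infty_{ij}\big]\operatorname{sgn}(\theta_j-\theta_i),\quad i\in[N].$$ Suppose the initial data $(\Theta^0,W^0)=(\theta_1^0,\dots,\theta_N^0,\omega_1^0,\dots,\omega_N^0)$ and parameters satisfy $$(\Theta^0,W^0)\in\mathcal{S},\qquad \kappa_0\cos\mathcal{U}+\kappa_1>0,\qquad \kappa_2>0,$$ and for some $\tau\in(0,\infty]$ let $\{(\theta_i,\omega_i)\}$ be a solution on $[0,\tau)$ with these initial data. Then $(\Theta(t),W(t))\in\mathcal{S}$ for all $t\in[0,\tau)$.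
   Context: $N\ge2$, $[N]=\{1,\dots,N\}$, $\kappa_0,\kappa_1\ge0$, $\kappa_2>0$ constants; $[\theta^\infty_{ij}]$ real $N\times N$ matrix with $\theta^\infty_{ii}=0$, $\theta^\infty_{ij}=\theta^\infty_{ji}$; $\operatorname{sgn}$ is the sign function. Energy: $\mathcal{E}:=\frac12\sum_i|\omega_i|^2+\frac{\kappa_2}{4N}\sum_{i,j}(|\theta_j-\theta_i|-\theta^\infty_{ij})^2$, and $\mathcal{E}(0)$ its value at the initial data. Define $\mathcal{U}:=\max_{i\ne j}\theta^\infty_{ij}+\sqrt{2N\mathcal{E}(0)/\kappa_2}$ and $\mathcal{S}:=\{(\Theta,W)\in\mathbb{R}^{2N}: |\theta_i-\theta_j|<\mathcal{U}<\pi \text{ for all } i,j\in[N]\}$ (in particular membership requires $\mathcal{U}<\pi$). A solution means a smooth (classical $C^1$) solution. *)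

theory Defs
  imports "HOL-Analysis.Analysis"
begin

text \<open>Oscillators are indexed by a finite type 'n, with N = CARD('n).
  A state is a pair of functions Theta, W :: 'n => real.\<close>

definition energy :: "real \<Rightarrow> ('n::finite \<Rightarrow> 'n \<Rightarrow> real) \<Rightarrow> ('n \<Rightarrow> real) \<Rightarrow> ('n \<Rightarrow> real) \<Rightarrow> real" where
  "energy k2 thinf Th W =
     (1/2) * (\<Sum>i\<in>UNIV. (W i)\<^sup>2)
     + k2 / (4 * real CARD('n)) * (\<Sum>i\<in>UNIV. \<Sum>j\<in>UNIV. (\<bar>Th j - Th i\<bar> - thinf i j)\<^sup>2)"

definition Ucal :: "real \<Rightarrow> ('n::finite \<Rightarrow> 'n \<Rightarrow> real) \<Rightarrow> real \<Rightarrow> real" where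
  "Ucal k2 thinf E0 =
     Max {thinf i j | i j. i \<noteq> j} + sqrt (2 * real CARD('n) * E0 / k2)"

definition inS :: "real \<Rightarrow> ('n::finite \<Rightarrow> real) \<Rightarrow> bool" where
  "inS U Th \<longleftrightarrow> (\<forall>i j. \<bar>Th i - Th j\<bar> < U \<and> U < pi)"

definition is_solution ::
  "real \<Rightarrow> real \<Rightarrow> real \<Rightarrow> ('n::finite \<Rightarrow> 'n \<Rightarrow> real) \<Rightarrow> ereal
    \<Rightarrow> ('n \<Rightarrow> real \<Rightarrow> real) \<Rightarrow> ('n \<Rightarrow> real \<Rightarrow> real) \<Rightarrow> bool" where
  "is_solution k0 k1 k2 thinf tau th om \<longleftrightarrow>
     (\<forall>i. \<forall>t. 0 \<le> t \<and> ereal t < tau \<longrightarrow>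
        (th i has_real_derivative om i t) (at t within {s. 0 \<le> s \<and> ereal s < tau}) \<and>
        (om i has_real_derivative
            (1 / real CARD('n)) * (\<Sum>j\<in>UNIV. (k0 * cos (th j t - th i t) + k1) * (om j t - om i t))
          + (k2 / real CARD('n)) * (\<Sum>j\<in>UNIV. (\<bar>th j t - th i t\<bar> - thinf i j) * sgn (th j t - th i t)))
          (at t within {s. 0 \<le> s \<and> ereal s < tau}))"

end

theory Submission
  imports Defs
begin

text \<open>While all phase gaps stay below \<open>U < pi\<close>, every coupling coefficient
  \<open>k0 cos (th j - th i) + k1\<close> is positive, so the energy decreases: its right derivative is minus
  a weighted sum of the squared frequency gaps. Since one pair alone contributes
  \<open>k2 / (2 N) * (\<bar>th k - th l\<bar> - thinf k l)\<^sup>2\<close> to the energy, a gap can reach \<open>U\<close> at a first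
  time \<open>T\<close> only if the energy at \<open>T\<close> is still the initial one. Then the energy is constant on
  \<open>[0, T]\<close>, all frequencies coincide there, the gaps are frozen at their initial values below \<open>U\<close>,
  and \<open>T\<close> cannot exist.
  The absolute values in the potential make the energy only one-sidedly differentiable when two
  phases collide; the extra term this produces vanishes because the frequencies of a classical
  solution are differentiable.\<close>

lemma has_real_derivative_abs_right:
  fixes x :: "real \<Rightarrow> real"
  assumes d: "(x has_real_derivative d) (at s within S)" and S: "S \<subseteq> {s..}"
  shows "((\<lambda>t. \<bar>x t\<bar>) has_real_derivative (if x s = 0 then \<bar>d\<bar> else sgn (x s) * d)) (at s within S)"
proof -
  have q: "((\<lambda>t. (x t - x s) / (t - s)) \<longlongrightarrow> d) (at s within S)"
    using d has_field_derivative_iff by blast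
  show ?thesis
  proof (cases "x s = 0")
    case True
    have "((\<lambda>t. \<bar>(x t - x s) / (t - s)\<bar>) \<longlongrightarrow> \<bar>d\<bar>) (at s within S)"
      using q by (rule tendsto_rabs)
    moreover have "eventually (\<lambda>t. \<bar>(x t - x s) / (t - s)\<bar> = (\<bar>x t\<bar> - \<bar>x s\<bar>) / (t - s)) (at s within S)"
      unfolding eventually_at_filter using S True
      by (intro always_eventually) (auto simp: abs_divide)
    ultimately have "((\<lambda>t. (\<bar>x t\<bar> - \<bar>x s\<bar>) / (t - s)) \<longlongrightarrow> \<bar>d\<bar>) (at s within S)"
      using tendsto_cong by fastforce
    then show ?thesis using True by (simp add: has_field_derivative_iff)
  next
    case False
    have "(x \<longlongrightarrow> x s) (at s within S)"
      using DERIV_continuous[OF d] continuous_within by blast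
    then have "eventually (\<lambda>t. dist (x t) (x s) < \<bar>x s\<bar>) (at s within S)"
      using False by (intro tendstoD) simp_all
    then have ev: "eventually (\<lambda>t. (\<bar>x t\<bar> - \<bar>x s\<bar>) / (t - s) = sgn (x s) * ((x t - x s) / (t - s))) (at s within S)"
    proof (rule eventually_mono)
      fix t assume "dist (x t) (x s) < \<bar>x s\<bar>"
      then have "\<bar>x t\<bar> = sgn (x s) * x t" "\<bar>x s\<bar> = sgn (x s) * x s"
        using False by (cases "x s > 0"; simp add: dist_real_def; linarith)+
      then show "(\<bar>x t\<bar> - \<bar>x s\<bar>) / (t - s) = sgn (x s) * ((x t - x s) / (t - s))"
        by (simp add: algebra_simps diff_divide_distrib)
    qed
    have "((\<lambda>t. sgn (x s) * ((x t - x s) / (t - s))) \<longlongrightarrow> sgn (x s) * d) (at s within S)"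
      using q by (rule tendsto_mult_left)
    then have "((\<lambda>t. (\<bar>x t\<bar> - \<bar>x s\<bar>) / (t - s)) \<longlongrightarrow> sgn (x s) * d) (at s within S)"
      by (subst tendsto_cong[OF ev])
    then show ?thesis using False by (simp add: has_field_derivative_iff)
  qed
qed

text \<open>Just to the right of a zero, \<open>x\<close> has the sign of its right derivative \<open>w\<close>.\<close>
lemma eventually_sgn_mult_right_derivative:
  fixes x :: "real \<Rightarrow> real"
  assumes d: "(x has_real_derivative w) (at_right s)"
  shows "eventually (\<lambda>t. sgn (x t) * w = sgn (x s) * w + (if x s = 0 then \<bar>w\<bar> else 0)) (at_right s)"
proof (cases "w = 0")
  case True
  then show ?thesis by simp
next
  case w: False
  show ?thesis
  proof (cases "x s = 0")
    case False
    have "(x \<longlongrightarrow> x s) (at_right s)"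
      using DERIV_continuous[OF d] continuous_within by blast
    then have "eventually (\<lambda>t. dist (x t) (x s) < \<bar>x s\<bar>) (at_right s)"
      using False by (intro tendstoD) simp_all
    then show ?thesis
    proof (rule eventually_mono)
      fix t assume "dist (x t) (x s) < \<bar>x s\<bar>"
      then have "sgn (x t) = sgn (x s)"
        using False by (cases "x s > 0"; simp add: dist_real_def sgn_if; linarith)
      then show "sgn (x t) * w = sgn (x s) * w + (if x s = 0 then \<bar>w\<bar> else 0)"
        using False by simp
    qed
  next
    case True
    have "((\<lambda>t. (x t - x s) / (t - s)) \<longlongrightarrow> w) (at_right s)"
      using d has_field_derivative_iff by blast
    then have "eventually (\<lambda>t. dist ((x t - x s) / (t - s)) w < \<bar>w\<bar>) (at_right s)"
      using w by (intro tendstoD) simp_all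
    moreover have "eventually (\<lambda>t. s < t) (at_right s)"
      by (rule eventually_at_right_less)
    ultimately show ?thesis
    proof (rule eventually_elim2)
      fix t assume "dist ((x t - x s) / (t - s)) w < \<bar>w\<bar>" and "s < t"
      then have "- \<bar>w\<bar> < x t / (t - s) - w" "x t / (t - s) - w < \<bar>w\<bar>"
        using True by (simp_all add: dist_real_def abs_less_iff)
      then have "sgn (x t) = sgn w"
        using \<open>s < t\<close> w
        by (cases "w > 0") (auto simp: zero_less_divide_iff divide_less_0_iff sgn_if)
      then show "sgn (x t) * w = sgn (x s) * w + (if x s = 0 then \<bar>w\<bar> else 0)"
        using True by (simp add: abs_sgn mult.commute)
    qed
  qed
qed

lemma right_derivative_eq_limit_of_derivative:
  fixes g g' :: "real \<Rightarrow> real"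
  assumes sb: "s < b" and cont: "continuous_on {s..b} g"
    and der: "\<And>t. s < t \<Longrightarrow> t < b \<Longrightarrow> (g has_real_derivative g' t) (at t)"
    and ds: "(g has_real_derivative d) (at s within {s..b})"
    and lim: "(g' \<longlongrightarrow> L) (at_right s)"
  shows "d = L"
proof -
  have "((\<lambda>t. (g t - g s) / (t - s)) \<longlongrightarrow> d) (at_right s)"
    using ds at_within_Icc_at_right[OF sb] has_field_derivative_iff by metis
  moreover have "((\<lambda>t. (g t - g s) / (t - s)) \<longlongrightarrow> L) (at_right s)"
  proof (rule tendstoI)
    fix e :: real assume "e > 0"
    with lim have "eventually (\<lambda>z. dist (g' z) L < e) (at_right s)"
      by (rule tendstoD)
    then obtain c where c: "c > s" "\<And>z. s < z \<Longrightarrow> z < c \<Longrightarrow> dist (g' z) L < e"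
      using eventually_at_right[of s "s + 1"] by auto
    show "eventually (\<lambda>t. dist ((g t - g s) / (t - s)) L < e) (at_right s)"
      unfolding eventually_at_right[of s "s + 1", simplified]
    proof (intro exI[of _ "min c b"] conjI allI impI)
      show "s < min c b" using c sb by simp
      fix t assume t: "s < t" "t < min c b"
      have "continuous_on {s..t} g"
        by (rule continuous_on_subset[OF cont]) (use t in auto)
      moreover have "\<And>z. s < z \<Longrightarrow> z < t \<Longrightarrow> g differentiable at z"
        using der t real_differentiable_def by fastforce
      ultimately obtain l z where z: "s < z" "z < t" "(g has_real_derivative l) (at z)"
        and mvt: "g t - g s = (t - s) * l"
        using MVT[OF t(1)] by blast
      have "l = g' z"
        using DERIV_unique[OF z(3) der[of z]] z t by simp
      then show "dist ((g t - g s) / (t - s)) L < e"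
        using c z t mvt by simp
    qed
  qed
  ultimately show "d = L"
    using tendsto_unique[OF trivial_limit_at_right_real] by blast
qed

lemma right_derivative_neg_imp_decreasing:
  fixes g :: "real \<Rightarrow> real"
  assumes ab: "a \<le> b" and cont: "continuous_on {a..b} g"
    and der: "\<And>s. a \<le> s \<Longrightarrow> s < b \<Longrightarrow> \<exists>d<0. (g has_real_derivative d) (at s within {s..b})"
  shows "g b \<le> g a"
proof (rule ccontr)
  assume "\<not> ?thesis"
  then have gb: "g a < g b" by simp
  define Z where "Z = {t \<in> {a..b}. g t \<le> g a}"
  have "closed Z"
    unfolding Z_def using cont by (rule continuous_on_closed_Collect_le) (auto intro: continuous_intros)
  moreover have "a \<in> Z" "bdd_above Z"
    using ab unfolding Z_def by (auto intro: bdd_aboveI[of _ b])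
  ultimately have "Sup Z \<in> Z"
    by (intro closed_contains_Sup) auto
  define c where "c = Sup Z"
  have c: "a \<le> c" "c \<le> b" "g c \<le> g a"
    using \<open>Sup Z \<in> Z\<close> unfolding Z_def c_def by auto
  with gb have cb: "c < b" by (cases "c = b") auto
  obtain d where "d < 0" "(g has_real_derivative d) (at c within {c..b})"
    using der c cb by blast
  then have "((\<lambda>t. (g t - g c) / (t - c)) \<longlongrightarrow> d) (at_right c)"
    using at_within_Icc_at_right[OF cb] has_field_derivative_iff by metis
  then have "eventually (\<lambda>t. (g t - g c) / (t - c) < 0) (at_right c)"
    using \<open>d < 0\<close> by (intro order_tendstoD)
  then obtain r where r: "r > c" "\<And>t. c < t \<Longrightarrow> t < r \<Longrightarrow> (g t - g c) / (t - c) < 0"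
    using eventually_at_right[of c "c + 1"] by auto
  define t where "t = (c + min r b) / 2"
  have t: "c < t" "t < r" "t < b"
    using r cb unfolding t_def by auto
  have "g t < g c"
    using r(2)[OF t(1,2)] t by (simp add: divide_less_0_iff)
  with c t have "t \<in> Z"
    unfolding Z_def by auto
  then have "t \<le> c"
    unfolding c_def using \<open>bdd_above Z\<close> by (rule cSup_upper)
  with t show False by simp
qed

lemma right_derivative_nonpos_imp_decreasing:
  fixes f :: "real \<Rightarrow> real"
  assumes ab: "a \<le> b" and cont: "continuous_on {a..b} f"
    and der: "\<And>s. a \<le> s \<Longrightarrow> s < b \<Longrightarrow> \<exists>d\<le>0. (f has_real_derivative d) (at s within {s..b})"
  shows "f b \<le> f a"
proof (rule field_le_epsilon)
  fix e :: real assume "0 < e"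
  define e' where "e' = e / (b - a + 1)"
  have e': "e' > 0" "e' * (b - a) \<le> e"
    using \<open>0 < e\<close> ab unfolding e'_def by (simp_all add: field_simps)
  have "(\<lambda>t. f t - e' * t) b \<le> (\<lambda>t. f t - e' * t) a"
  proof (rule right_derivative_neg_imp_decreasing[OF ab])
    show "continuous_on {a..b} (\<lambda>t. f t - e' * t)"
      by (intro continuous_intros cont)
    fix s assume "a \<le> s" "s < b"
    then obtain d where "d \<le> 0" "(f has_real_derivative d) (at s within {s..b})"
      using der by blast
    then show "\<exists>d<0. ((\<lambda>t. f t - e' * t) has_real_derivative d) (at s within {s..b})"
      using e' by (intro exI[of _ "d - e'"]) (auto intro!: derivative_eq_intros)
  qed
  with e' show "f b \<le> f a + e"
    by (simp add: algebra_simps)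
qed

lemma sum_weighted_antisym:
  fixes h :: "'a \<Rightarrow> 'a \<Rightarrow> real"
  assumes "\<And>i j. h j i = - h i j"
  shows "(\<Sum>i\<in>A. \<Sum>j\<in>A. v i * h i j) = -(1/2) * (\<Sum>i\<in>A. \<Sum>j\<in>A. h i j * (v j - v i))"
proof -
  have "(\<Sum>i\<in>A. \<Sum>j\<in>A. h i j * v j) = (\<Sum>j\<in>A. \<Sum>i\<in>A. h i j * v j)"
    by (rule sum.swap)
  also have "\<dots> = (\<Sum>j\<in>A. \<Sum>i\<in>A. - (v j * h j i))"
    by (intro sum.cong refl) (metis assms minus_minus mult.commute mult_minus_right)
  finally have "(\<Sum>i\<in>A. \<Sum>j\<in>A. h i j * v j) = - (\<Sum>i\<in>A. \<Sum>j\<in>A. v i * h i j)"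
    by (simp add: sum_negf)
  moreover have "(\<Sum>i\<in>A. \<Sum>j\<in>A. h i j * (v j - v i)) =
      (\<Sum>i\<in>A. \<Sum>j\<in>A. h i j * v j) - (\<Sum>i\<in>A. \<Sum>j\<in>A. v i * h i j)"
    by (simp add: right_diff_distrib sum_subtractf mult.commute)
  ultimately show ?thesis by simp
qed

lemma first_crossing_time:
  fixes f :: "'p::finite \<Rightarrow> real \<Rightarrow> real"
  assumes ab: "a \<le> b" and cont: "\<And>p. continuous_on {a..b} (f p)"
    and start: "\<And>p. f p a < U" and cross: "U \<le> f q b"
  obtains T p where "a < T" "T \<le> b" "U \<le> f p T" "\<And>s p'. a \<le> s \<Longrightarrow> s < T \<Longrightarrow> f p' s < U"
proof -
  define B where "B = (\<Union>p. {t \<in> {a..b}. U \<le> f p t})"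
  have "closed B"
    unfolding B_def by (intro closed_UN finite_UNIV ballI continuous_on_closed_Collect_le cont) auto
  moreover have "b \<in> B" "bdd_below B"
    using ab cross unfolding B_def by (auto intro: bdd_belowI[of _ a])
  ultimately have "Inf B \<in> B"
    by (intro closed_contains_Inf) auto
  then obtain p where T: "a \<le> Inf B" "Inf B \<le> b" "U \<le> f p (Inf B)"
    unfolding B_def by auto
  moreover have "a \<noteq> Inf B"
    using T(3) start[of p] by auto
  moreover have "f p' s < U" if "a \<le> s" "s < Inf B" for s p'
  proof -
    have "s \<notin> B"
      using cInf_lower[OF _ \<open>bdd_below B\<close>, of s] that by linarith
    then show ?thesis
      using that T unfolding B_def by (auto simp: not_le)
  qed
  ultimately show ?thesis
    by (intro that[of "Inf B" p]) auto
qed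

lemma coupling_pos_of_abs_less:
  fixes k0 k1 U y :: real
  assumes "k0 \<ge> 0" "k0 * cos U + k1 > 0" "\<bar>y\<bar> < U" "U < pi"
  shows "k0 * cos y + k1 > 0"
proof -
  have "cos U \<le> cos \<bar>y\<bar>"
    using assms by (intro cos_monotone_0_pi_le) auto
  then have "cos U \<le> cos y"
    by simp
  then show ?thesis
    using assms by (smt (verit) mult_left_mono)
qed

lemma has_real_derivative_power2:
  fixes f :: "real \<Rightarrow> real"
  assumes "(f has_real_derivative d) (at x within S)"
  shows "((\<lambda>t. (f t)\<^sup>2) has_real_derivative 2 * f x * d) (at x within S)"
  using DERIV_power[OF assms, of 2] by (simp add: ac_simps)

lemma energy_nonneg:
  assumes "k2 \<ge> 0"
  shows "0 \<le> energy k2 thinf Th W"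
  unfolding energy_def using assms
  by (intro add_nonneg_nonneg mult_nonneg_nonneg sum_nonneg) auto

lemma le_energy_if_Ucal_le_gap:
  fixes thinf :: "'n::finite \<Rightarrow> 'n \<Rightarrow> real"
  assumes k2: "k2 > 0" and symm: "\<And>i j. thinf i j = thinf j i" and "k \<noteq> l"
    and gap: "Ucal k2 thinf E \<le> \<bar>Th k - Th l\<bar>"
  shows "E \<le> energy k2 thinf Th W"
proof (cases "E \<ge> 0")
  case False
  then show ?thesis
    using energy_nonneg[of k2 thinf Th W] k2 by linarith
next
  case True
  define N where "N = real CARD('n)"
  define pot where "pot i j = (\<bar>Th j - Th i\<bar> - thinf i j)\<^sup>2" for i j
  have "finite {thinf i j | i j. i \<noteq> j}"
    by (rule finite_subset[of _ "range (case_prod thinf)"]) auto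
  then have "thinf k l \<le> Max {thinf i j | i j. i \<noteq> j}"
    using \<open>k \<noteq> l\<close> by (intro Max_ge) auto
  then have "sqrt (2 * N * E / k2) \<le> \<bar>Th l - Th k\<bar> - thinf k l"
    using gap unfolding Ucal_def N_def by (simp add: abs_minus_commute)
  then have kl: "2 * N * E / k2 \<le> pot k l"
    unfolding pot_def by (rule sqrt_le_D)
  have lk: "pot l k = pot k l"
    unfolding pot_def by (simp add: abs_minus_commute symm)
  have "pot k l + pot l k = (\<Sum>i\<in>{k, l}. pot i (if i = k then l else k))"
    using \<open>k \<noteq> l\<close> by simp
  also have "\<dots> \<le> (\<Sum>i\<in>{k, l}. \<Sum>j\<in>UNIV. pot i j)"
    unfolding pot_def by (intro sum_mono member_le_sum) auto
  also have "\<dots> \<le> (\<Sum>i\<in>UNIV. \<Sum>j\<in>UNIV. pot i j)"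
    unfolding pot_def by (intro sum_mono2 sum_nonneg) auto
  finally have "4 * N * E / k2 \<le> (\<Sum>i\<in>UNIV. \<Sum>j\<in>UNIV. pot i j)"
    using kl lk by simp
  then have "E \<le> k2 / (4 * N) * (\<Sum>i\<in>UNIV. \<Sum>j\<in>UNIV. pot i j)"
    using k2 by (simp add: N_def field_simps)
  also have "\<dots> \<le> energy k2 thinf Th W"
    unfolding energy_def pot_def N_def by (simp add: sum_nonneg)
  finally show ?thesis .
qed

locale kuramoto_solution =
  fixes k0 k1 k2 :: real and thinf :: "'n::finite \<Rightarrow> 'n \<Rightarrow> real" and tau :: ereal
    and th om :: "'n \<Rightarrow> real \<Rightarrow> real"
  assumes k2_pos: "k2 > 0" and thinf_sym: "\<And>i j. thinf i j = thinf j i"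
    and solution: "is_solution k0 k1 k2 thinf tau th om"
begin

definition lifespan :: "real set" where
  "lifespan = {t. 0 \<le> t \<and> ereal t < tau}"

definition coupling :: "'n \<Rightarrow> 'n \<Rightarrow> real \<Rightarrow> real" where
  "coupling i j t = k0 * cos (th j t - th i t) + k1"

definition bond :: "'n \<Rightarrow> 'n \<Rightarrow> real \<Rightarrow> real" where
  "bond i j t = (\<bar>th j t - th i t\<bar> - thinf i j) * sgn (th j t - th i t)"

definition force :: "'n \<Rightarrow> real \<Rightarrow> real" where
  "force i t = 1 / real CARD('n) * (\<Sum>j\<in>UNIV. coupling i j t * (om j t - om i t))
     + k2 / real CARD('n) * (\<Sum>j\<in>UNIV. bond i j t)"

definition energy_at :: "real \<Rightarrow> real" where
  "energy_at t = energy k2 thinf (\<lambda>i. th i t) (\<lambda>i. om i t)"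

definition dissipation :: "real \<Rightarrow> real" where
  "dissipation t = 1 / (2 * real CARD('n)) *
     (\<Sum>i\<in>UNIV. \<Sum>j\<in>UNIV. coupling i j t * (om j t - om i t)\<^sup>2)"

text \<open>At a collision \<open>th i t = th j t\<close> the right derivative of \<open>\<bar>th j - th i\<bar>\<close> is
  \<open>\<bar>om j t - om i t\<bar>\<close> rather than \<open>sgn (th j t - th i t) * (om j t - om i t) = 0\<close>;
  this term collects the resulting defect in the energy identity.\<close>
definition collision_term :: "real \<Rightarrow> real" where
  "collision_term t =
     (\<Sum>i\<in>UNIV. \<Sum>j\<in>UNIV. if th j t = th i t then thinf i j * \<bar>om j t - om i t\<bar> else 0)"

lemma th_has_derivative: "t \<in> lifespan \<Longrightarrow> (th i has_real_derivative om i t) (at t within lifespan)"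
  using solution unfolding is_solution_def lifespan_def by auto

lemma om_has_derivative: "t \<in> lifespan \<Longrightarrow> (om i has_real_derivative force i t) (at t within lifespan)"
  using solution unfolding is_solution_def lifespan_def force_def bond_def coupling_def by auto

lemma Icc_subset_lifespan: "0 \<le> a \<Longrightarrow> ereal b < tau \<Longrightarrow> {a..b} \<subseteq> lifespan"
  unfolding lifespan_def by (auto intro: le_less_trans[of _ "ereal b"])

lemma at_within_lifespan:
  assumes "0 \<le> a" "ereal b < tau" "a < t" "t < b"
  shows "at t within lifespan = at t"
  using assms Icc_subset_lifespan[of a b]
  by (intro at_within_open_subset[of t "{a<..<b}"]) auto

lemma continuous_on_th: "S \<subseteq> lifespan \<Longrightarrow> continuous_on S (th i)"
proof -
  have "continuous_on lifespan (th i)"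
    using th_has_derivative DERIV_continuous continuous_on_eq_continuous_within by blast
  then show "S \<subseteq> lifespan \<Longrightarrow> continuous_on S (th i)"
    by (rule continuous_on_subset)
qed

lemma continuous_on_om: "S \<subseteq> lifespan \<Longrightarrow> continuous_on S (om i)"
proof -
  have "continuous_on lifespan (om i)"
    using om_has_derivative DERIV_continuous continuous_on_eq_continuous_within by blast
  then show "S \<subseteq> lifespan \<Longrightarrow> continuous_on S (om i)"
    by (rule continuous_on_subset)
qed

lemma bond_eq: "bond i j t = (th j t - th i t) - thinf i j * sgn (th j t - th i t)"
  unfolding bond_def by (cases "th j t - th i t" "0 :: real" rule: linorder_cases) auto

lemma bond_antisym: "bond j i t = - bond i j t"
proof -
  have "sgn (th i t - th j t) = - sgn (th j t - th i t)"
    by (metis minus_diff_eq sgn_minus)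
  then show ?thesis
    unfolding bond_eq using thinf_sym[of j i] by simp
qed

lemma weighted_force_sum:
  "(\<Sum>i\<in>UNIV. v i * force i t) =
     - 1 / (2 * real CARD('n)) * (\<Sum>i\<in>UNIV. \<Sum>j\<in>UNIV. coupling i j t * (om j t - om i t) * (v j - v i))
     - k2 / (2 * real CARD('n)) * (\<Sum>i\<in>UNIV. \<Sum>j\<in>UNIV. bond i j t * (v j - v i))"
proof -
  define a where "a i j = coupling i j t * (om j t - om i t)" for i j
  define h where "h i j = 1 / real CARD('n) * a i j + k2 / real CARD('n) * bond i j t" for i j
  have h_antisym: "h j i = - h i j" for i j
  proof -
    have "cos (th i t - th j t) = cos (th j t - th i t)"
      by (metis cos_minus minus_diff_eq)
    then show ?thesis
      unfolding h_def a_def coupling_def using bond_antisym[of i j t] by (simp add: algebra_simps)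
  qed
  have "force i t = (\<Sum>j\<in>UNIV. h i j)" for i
    unfolding force_def h_def a_def by (simp only: sum.distrib sum_distrib_left)
  then have "(\<Sum>i\<in>UNIV. v i * force i t) = (\<Sum>i\<in>UNIV. \<Sum>j\<in>UNIV. v i * h i j)"
    by (simp only: sum_distrib_left)
  also have "\<dots> = -(1/2) * (\<Sum>i\<in>UNIV. \<Sum>j\<in>UNIV. h i j * (v j - v i))"
    using h_antisym by (rule sum_weighted_antisym)
  also have "(\<Sum>i\<in>UNIV. \<Sum>j\<in>UNIV. h i j * (v j - v i)) =
      1 / real CARD('n) * (\<Sum>i\<in>UNIV. \<Sum>j\<in>UNIV. a i j * (v j - v i))
      + k2 / real CARD('n) * (\<Sum>i\<in>UNIV. \<Sum>j\<in>UNIV. bond i j t * (v j - v i))"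
    unfolding h_def by (simp only: distrib_right sum.distrib sum_distrib_left mult.assoc)
  finally have "(\<Sum>i\<in>UNIV. v i * force i t) =
      -(1/2) * (1 / real CARD('n) * (\<Sum>i\<in>UNIV. \<Sum>j\<in>UNIV. a i j * (v j - v i))
      + k2 / real CARD('n) * (\<Sum>i\<in>UNIV. \<Sum>j\<in>UNIV. bond i j t * (v j - v i)))" .
  moreover have "-(1/2) * (1 / c * A + k2 / c * B) = - 1 / (2 * c) * A - k2 / (2 * c) * B" for c A B :: real
    by (simp add: field_simps)
  ultimately show ?thesis
    unfolding a_def by (simp only:)
qed

lemma om_weighted_force_tendsto_at_right:
  assumes s: "s \<in> lifespan" and sb: "s < b" and b: "ereal b < tau"
  shows "((\<lambda>t. \<Sum>i\<in>UNIV. om i s * force i t) \<longlongrightarrow>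
      (\<Sum>i\<in>UNIV. om i s * force i s) + k2 / (2 * real CARD('n)) * collision_term s) (at_right s)"
proof -
  define R where "R t =
      - 1 / (2 * real CARD('n)) *
        (\<Sum>i\<in>UNIV. \<Sum>j\<in>UNIV. coupling i j t * (om j t - om i t) * (om j s - om i s))
      - k2 / (2 * real CARD('n)) *
        ((\<Sum>i\<in>UNIV. \<Sum>j\<in>UNIV. ((th j t - th i t) - thinf i j * sgn (th j s - th i s)) * (om j s - om i s))
          - collision_term s)" for t
  have I: "{s..b} \<subseteq> lifespan"
    using s b Icc_subset_lifespan unfolding lifespan_def by auto
  have at_s: "at s within {s..b} = at_right s"
    using sb by (rule at_within_Icc_at_right)
  have "((\<lambda>t. th j t - th i t) has_real_derivative om j s - om i s) (at_right s)" for i j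
    using DERIV_subset[OF DERIV_diff[OF th_has_derivative[OF s] th_has_derivative[OF s]] I]
    unfolding at_s .
  then have "eventually (\<lambda>t. \<forall>i j. sgn (th j t - th i t) * (om j s - om i s) =
      sgn (th j s - th i s) * (om j s - om i s)
      + (if th j s - th i s = 0 then \<bar>om j s - om i s\<bar> else 0)) (at_right s)"
    by (intro eventually_all_finite eventually_sgn_mult_right_derivative)
  then have ev: "eventually (\<lambda>t. R t = (\<Sum>i\<in>UNIV. om i s * force i t)) (at_right s)"
  proof eventually_elim
    case (elim t)
    have "bond i j t * (om j s - om i s) =
        ((th j t - th i t) - thinf i j * sgn (th j s - th i s)) * (om j s - om i s)
        - (if th j s = th i s then thinf i j * \<bar>om j s - om i s\<bar> else 0)" for i j
    proof -
      have "sgn (th j t - th i t) * (om j s - om i s) = sgn (th j s - th i s) * (om j s - om i s)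
          + (if th j s = th i s then \<bar>om j s - om i s\<bar> else 0)"
        using elim by simp
      then show ?thesis
        unfolding bond_eq by (smt (verit) mult.assoc left_diff_distrib right_diff_distrib distrib_left)
    qed
    then have "(\<Sum>i\<in>UNIV. \<Sum>j\<in>UNIV. bond i j t * (om j s - om i s)) =
        (\<Sum>i\<in>UNIV. \<Sum>j\<in>UNIV. ((th j t - th i t) - thinf i j * sgn (th j s - th i s)) * (om j s - om i s))
        - collision_term s"
      unfolding collision_term_def by (simp add: sum_subtractf)
    then show ?case
      unfolding R_def weighted_force_sum by simp
  qed
  have lim: "(R \<longlongrightarrow> R s) (at_right s)"
  proof -
    have "continuous_on {s..b} R"
      unfolding R_def coupling_def by (intro continuous_intros continuous_on_th continuous_on_om I)
    then show ?thesis
      using sb unfolding at_s[symmetric] continuous_on_def by auto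
  qed
  have "R s = (\<Sum>i\<in>UNIV. om i s * force i s) + k2 / (2 * real CARD('n)) * collision_term s"
    unfolding R_def weighted_force_sum bond_eq[symmetric] by (simp add: algebra_simps)
  with Lim_transform_eventually[OF lim ev] show ?thesis
    by simp
qed

text \<open>The force is discontinuous where two phases coincide. Since a classical solution makes
  \<open>\<Sum>i. om i s * om i t\<close> differentiable in \<open>t\<close>, its derivative cannot jump at \<open>s\<close>, and the jump
  computed in the previous lemma has to vanish.\<close>
lemma collision_term_eq_0:
  assumes s: "s \<in> lifespan" and sb: "s < b" and b: "ereal b < tau"
  shows "collision_term s = 0"
proof -
  define g where "g t = (\<Sum>i\<in>UNIV. om i s * om i t)" for t
  define g' where "g' t = (\<Sum>i\<in>UNIV. om i s * force i t)" for t
  have I: "{s..b} \<subseteq> lifespan"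
    using s b Icc_subset_lifespan unfolding lifespan_def by auto
  have g_deriv: "(g has_real_derivative g' t) (at t within lifespan)" if "t \<in> lifespan" for t
    unfolding g_def g'_def by (intro DERIV_sum DERIV_cmult om_has_derivative that)
  have "continuous_on {s..b} g"
    unfolding g_def by (intro continuous_intros continuous_on_om I)
  moreover have "(g has_real_derivative g' t) (at t)" if "s < t" "t < b" for t
  proof -
    have "t \<in> lifespan"
      using I that by auto
    moreover have "0 \<le> s"
      using s unfolding lifespan_def by simp
    ultimately show ?thesis
      using g_deriv[of t] at_within_lifespan[of s b t] that b by simp
  qed
  moreover have "(g has_real_derivative g' s) (at s within {s..b})"
    using g_deriv[OF s] I by (rule DERIV_subset)
  moreover have "(g' \<longlongrightarrow> g' s + k2 / (2 * real CARD('n)) * collision_term s) (at_right s)"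
    unfolding g'_def by (rule om_weighted_force_tendsto_at_right[OF s sb b])
  ultimately have "g' s = g' s + k2 / (2 * real CARD('n)) * collision_term s"
    by (rule right_derivative_eq_limit_of_derivative[OF sb])
  then show ?thesis
    using k2_pos by simp
qed

lemma energy_at_has_right_derivative:
  assumes s: "s \<in> lifespan" and sb: "s < b" and b: "ereal b < tau"
  shows "(energy_at has_real_derivative - dissipation s) (at s within {s..b})"
proof -
  have I: "{s..b} \<subseteq> lifespan"
    using s b Icc_subset_lifespan unfolding lifespan_def by auto
  have dth: "(th i has_real_derivative om i s) (at s within {s..b})" for i
    using th_has_derivative[OF s] I by (rule DERIV_subset)
  have dom: "(om i has_real_derivative force i s) (at s within {s..b})" for i
    using om_has_derivative[OF s] I by (rule DERIV_subset)
  define rho where "rho i j = (if th j s = th i s then \<bar>om j s - om i s\<bar>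
    else sgn (th j s - th i s) * (om j s - om i s))" for i j
  have "((\<lambda>t. \<bar>th j t - th i t\<bar>) has_real_derivative rho i j) (at s within {s..b})" for i j
    using has_real_derivative_abs_right[OF DERIV_diff[OF dth dth]] unfolding rho_def by simp
  from DERIV_diff[OF this DERIV_const]
  have dpot: "((\<lambda>t. (\<bar>th j t - th i t\<bar> - thinf i j)\<^sup>2) has_real_derivative
      2 * (\<bar>th j s - th i s\<bar> - thinf i j) * rho i j) (at s within {s..b})" for i j
    using has_real_derivative_power2 by fastforce
  define B where "B = (\<Sum>i\<in>UNIV. \<Sum>j\<in>UNIV. bond i j s * (om j s - om i s))"
  have "(energy_at has_real_derivative
      1/2 * (\<Sum>i\<in>UNIV. 2 * om i s * force i s)
      + k2 / (4 * real CARD('n)) * (\<Sum>i\<in>UNIV. \<Sum>j\<in>UNIV. 2 * (\<bar>th j s - th i s\<bar> - thinf i j) * rho i j))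
      (at s within {s..b})"
    unfolding energy_at_def energy_def
    by (intro DERIV_add DERIV_cmult DERIV_sum has_real_derivative_power2 dom dpot)
  moreover have "(\<Sum>i\<in>UNIV. 2 * om i s * force i s) = 2 * (- dissipation s - k2 / (2 * real CARD('n)) * B)"
    unfolding sum_distrib_left[symmetric] mult.assoc weighted_force_sum dissipation_def B_def
    by (simp add: power2_eq_square mult.assoc)
  moreover have "(\<Sum>i\<in>UNIV. \<Sum>j\<in>UNIV. 2 * (\<bar>th j s - th i s\<bar> - thinf i j) * rho i j) = 2 * B"
  proof -
    have "(\<bar>th j s - th i s\<bar> - thinf i j) * rho i j = bond i j s * (om j s - om i s)
        - (if th j s = th i s then thinf i j * \<bar>om j s - om i s\<bar> else 0)" for i j
      unfolding rho_def bond_def by auto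
    then have "(\<Sum>i\<in>UNIV. \<Sum>j\<in>UNIV. (\<bar>th j s - th i s\<bar> - thinf i j) * rho i j) = B - collision_term s"
      unfolding B_def collision_term_def by (simp add: sum_subtractf)
    moreover have "(\<Sum>i\<in>UNIV. \<Sum>j\<in>UNIV. 2 * (\<bar>th j s - th i s\<bar> - thinf i j) * rho i j) =
        2 * (\<Sum>i\<in>UNIV. \<Sum>j\<in>UNIV. (\<bar>th j s - th i s\<bar> - thinf i j) * rho i j)"
      by (simp only: sum_distrib_left mult.assoc)
    ultimately show ?thesis
      using collision_term_eq_0[OF s sb b] by simp
  qed
  ultimately show ?thesis
    by (simp add: field_simps)
qed

lemma dissipation_nonneg: "(\<And>i j. 0 \<le> coupling i j s) \<Longrightarrow> 0 \<le> dissipation s"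
  unfolding dissipation_def by (intro mult_nonneg_nonneg sum_nonneg) auto

lemma energy_at_decreasing:
  assumes "0 \<le> p" "p \<le> q" "ereal q < tau"
    and coupled: "\<And>s i j. p \<le> s \<Longrightarrow> s < q \<Longrightarrow> 0 \<le> coupling i j s"
  shows "energy_at q \<le> energy_at p"
proof (rule right_derivative_nonpos_imp_decreasing[OF \<open>p \<le> q\<close>])
  have I: "{p..q} \<subseteq> lifespan"
    using assms Icc_subset_lifespan by simp
  then show "continuous_on {p..q} energy_at"
    unfolding energy_at_def energy_def by (intro continuous_intros continuous_on_th continuous_on_om)
  fix s assume "p \<le> s" "s < q"
  with I have "(energy_at has_real_derivative - dissipation s) (at s within {s..q})"
    by (intro energy_at_has_right_derivative \<open>ereal q < tau\<close>) auto
  moreover have "0 \<le> dissipation s"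
    using coupled[OF \<open>p \<le> s\<close> \<open>s < q\<close>] by (rule dissipation_nonneg)
  ultimately show "\<exists>d\<le>0. (energy_at has_real_derivative d) (at s within {s..q})"
    by (intro exI[of _ "- dissipation s"]) auto
qed

lemma dissipation_eq_0_if_energy_at_const:
  assumes s: "s \<in> lifespan" and sb: "s < b" and b: "ereal b < tau"
    and const: "\<And>t. s \<le> t \<Longrightarrow> t \<le> b \<Longrightarrow> energy_at t = energy_at s"
  shows "dissipation s = 0"
proof -
  have "(energy_at has_real_derivative 0) (at s within {s..b})"
  proof (rule has_field_derivative_transform_within[OF DERIV_const zero_less_one])
    show "s \<in> {s..b}"
      using sb by simp
    show "energy_at s = energy_at t" if "t \<in> {s..b}" for t
      using const[of t] that by simp
  qed
  with energy_at_has_right_derivative[OF s sb b] have "- dissipation s = 0"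
    by (rule has_field_derivative_unique) (simp add: at_within_Icc_at_right[OF sb])
  then show ?thesis by simp
qed

lemma om_eq_if_dissipation_eq_0:
  assumes pos: "\<And>i j. 0 < coupling i j s" and "dissipation s = 0"
  shows "om i s = om j s"
proof -
  have nonneg: "0 \<le> coupling i j s * (om j s - om i s)\<^sup>2" for i j
    using pos[of i j] by simp
  have "(\<Sum>i\<in>UNIV. \<Sum>j\<in>UNIV. coupling i j s * (om j s - om i s)\<^sup>2) = 0"
    using \<open>dissipation s = 0\<close> unfolding dissipation_def by simp
  then have "coupling i j s * (om j s - om i s)\<^sup>2 = 0"
    using nonneg by (simp add: sum_nonneg_eq_0_iff sum_nonneg)
  then show ?thesis
    using pos[of i j] by simp
qed

lemma th_diff_const:
  assumes "0 \<le> p" "p < q" "ereal q < tau" and om_eq: "\<And>s. p < s \<Longrightarrow> s < q \<Longrightarrow> om i s = om j s"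
  shows "th i q - th j q = th i p - th j p"
proof (rule DERIV_isconst_end[OF \<open>p < q\<close>])
  have I: "{p..q} \<subseteq> lifespan"
    using assms Icc_subset_lifespan by simp
  then show "continuous_on {p..q} (\<lambda>t. th i t - th j t)"
    by (intro continuous_intros continuous_on_th)
  fix t assume t: "p < t" "t < q"
  with I have "((\<lambda>t. th i t - th j t) has_real_derivative om i t - om j t) (at t within lifespan)"
    by (intro DERIV_diff th_has_derivative) auto
  then show "((\<lambda>t. th i t - th j t) has_real_derivative 0) (at t)"
    using om_eq[OF t] at_within_lifespan[OF assms(1,3) t] by simp
qed

lemma th_diff_conserved_if_energy_at_conserved:
  assumes T: "0 < T" "ereal T < tau"
    and coupled: "\<And>s i j. 0 \<le> s \<Longrightarrow> s < T \<Longrightarrow> 0 < coupling i j s"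
    and const: "\<And>s. 0 \<le> s \<Longrightarrow> s \<le> T \<Longrightarrow> energy_at s = energy_at 0"
  shows "th k T - th l T = th k 0 - th l 0"
proof (rule th_diff_const[OF _ T])
  fix s assume s: "0 < s" "s < T"
  show "om k s = om l s"
  proof (rule om_eq_if_dissipation_eq_0)
    show "0 < coupling i j s" for i j
      using s by (simp add: coupled)
    have "s \<in> lifespan"
      using Icc_subset_lifespan[of 0 T] s T by auto
    then show "dissipation s = 0"
    proof (rule dissipation_eq_0_if_energy_at_const[OF _ \<open>s < T\<close> \<open>ereal T < tau\<close>])
      show "energy_at r = energy_at s" if "s \<le> r" "r \<le> T" for r
        using const[of r] const[of s] s that by simp
    qed
  qed
qed simp

theorem phase_gaps_stay_below_Ucal:
  assumes k0: "k0 \<ge> 0" and U: "U = Ucal k2 thinf (energy_at 0)" and U_pi: "U < pi"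
    and coupled_at_U: "k0 * cos U + k1 > 0" and init: "\<And>i j. \<bar>th i 0 - th j 0\<bar> < U"
    and t: "t \<in> lifespan"
  shows "\<bar>th i t - th j t\<bar> < U"
proof (rule ccontr)
  assume exceeded: "\<not> ?thesis"
  have I: "{0..t} \<subseteq> lifespan"
    using t Icc_subset_lifespan unfolding lifespan_def by auto
  obtain T p where T: "0 < T" "T \<le> t" and crossed: "U \<le> \<bar>th (fst p) T - th (snd p) T\<bar>"
    and below: "\<And>s p'. 0 \<le> s \<Longrightarrow> s < T \<Longrightarrow> \<bar>th (fst p') s - th (snd p') s\<bar> < U"
  proof (rule first_crossing_time[of 0 t "\<lambda>p s. \<bar>th (fst p) s - th (snd p) s\<bar>" U "(i, j)"])
    show "continuous_on {0..t} (\<lambda>s. \<bar>th (fst p) s - th (snd p) s\<bar>)" for p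
      by (intro continuous_intros continuous_on_th I)
  qed (use t init exceeded in \<open>auto simp: lifespan_def\<close>)
  define k l where "k = fst p" and "l = snd p"
  have "k \<noteq> l"
    using crossed init[of k k] unfolding k_def l_def by auto
  have "T \<in> lifespan"
    using I T by auto
  then have T_tau: "ereal T < tau"
    unfolding lifespan_def by simp
  have coupled: "0 < coupling i' j' s" if "0 \<le> s" "s < T" for i' j' s
    unfolding coupling_def using below[OF that, of "(j', i')"]
    by (intro coupling_pos_of_abs_less[OF k0 coupled_at_U _ U_pi]) simp
  have decreasing: "energy_at r \<le> energy_at q" if "0 \<le> q" "q \<le> r" "r \<le> T" for q r
  proof (rule energy_at_decreasing)
    show "ereal r < tau"
      using T_tau \<open>r \<le> T\<close> by (meson ereal_less_eq(3) le_less_trans)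
    show "0 \<le> coupling i' j' s" if "q \<le> s" "s < r" for s i' j'
      using coupled[of s i' j'] that \<open>0 \<le> q\<close> \<open>r \<le> T\<close> by simp
  qed (use that in auto)
  have "energy_at 0 \<le> energy_at T"
    unfolding energy_at_def[of T]
  proof (rule le_energy_if_Ucal_le_gap[OF k2_pos _ \<open>k \<noteq> l\<close>])
    show "thinf i' j' = thinf j' i'" for i' j'
      by (rule thinf_sym)
    show "Ucal k2 thinf (energy_at 0) \<le> \<bar>th k T - th l T\<bar>"
      using crossed U unfolding k_def l_def by simp
  qed
  then have conserved: "energy_at s = energy_at 0" if "0 \<le> s" "s \<le> T" for s
    using decreasing[of 0 s] decreasing[of s T] that by simp
  have "th k T - th l T = th k 0 - th l 0"
    by (rule th_diff_conserved_if_energy_at_conserved[OF \<open>0 < T\<close> T_tau coupled conserved])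
  then show False
    using crossed init[of k l] unfolding k_def l_def by simp
qed

end

theorem lemma3p1:
  fixes k0 k1 k2 :: real
    and thinf :: "'n::finite \<Rightarrow> 'n \<Rightarrow> real"
    and tau :: ereal
    and th om :: "'n \<Rightarrow> real \<Rightarrow> real"
  assumes N2: "CARD('n) \<ge> 2"
    and k0: "k0 \<ge> 0" and k1: "k1 \<ge> 0" and k2: "k2 > 0"
    and diag: "\<And>i. thinf i i = 0"
    and symm: "\<And>i j. thinf i j = thinf j i"
    and tau: "tau > 0"
    and sol: "is_solution k0 k1 k2 thinf tau th om"
    and init: "inS (Ucal k2 thinf (energy k2 thinf (\<lambda>i. th i 0) (\<lambda>i. om i 0))) (\<lambda>i. th i 0)"
    and coupl: "k0 * cos (Ucal k2 thinf (energy k2 thinf (\<lambda>i. th i 0) (\<lambda>i. om i 0))) + k1 > 0"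
  shows "\<forall>t. 0 \<le> t \<and> ereal t < tau \<longrightarrow>
           inS (Ucal k2 thinf (energy k2 thinf (\<lambda>i. th i 0) (\<lambda>i. om i 0))) (\<lambda>i. th i t)"
proof -
  interpret kuramoto_solution k0 k1 k2 thinf tau th om
    using k2 symm sol by unfold_locales
  define U where "U = Ucal k2 thinf (energy_at 0)"
  have "U < pi" and "\<And>i j. \<bar>th i 0 - th j 0\<bar> < U"
    using init unfolding inS_def U_def energy_at_def by auto
  moreover have "k0 * cos U + k1 > 0"
    using coupl unfolding U_def energy_at_def .
  ultimately have "\<bar>th i t - th j t\<bar> < U" if "t \<in> lifespan" for t i j
    using phase_gaps_stay_below_Ucal[OF k0 U_def] that by blast
  then show ?thesis
    using \<open>U < pi\<close> unfolding inS_def U_def energy_at_def lifespan_def by auto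
qed

end
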